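(* Let $m,n\ge1$ and let $F\subseteq\{1,\dots,m\}\times\{1,\dots,n\}$ be a binary image with row sums $(r_1,\dots,r_m)$ and column sums $(c_1,\dots,c_n)$, where $r_1=n$ and $r_m=0$. Let $L_h(F)$ be the length of the horizontal boundary of $F$. Define $b_i=\#\{j:c_j\ge i\}$ and $d_i=b_i-r_i$ for $i=1,\dots,m$. Let $k$ be an integer with $2\le k\le m-1$ such that $d_k<0$ and $d_{k+1}\ge 0$, and let $\sigma=\sum_{i=1}^k d_i$. Then for all integers $t,s\ge0$, every set of indices $\{i_1<i_2<\dots<i_{2t+1}\}\subseteq\{1,2,\dots,k,m\}$ and every set of indices $\{\tilde i_1<\tilde i_2<\dots<\tilde i_{2s+1}\}\subseteq\{1,k+1,k+2,\dots,m\}$, \[ L_h(F)\ \ge\ 2n+\big(d_{i_1}-d_{i_2}+d_{i_3}-\cdots-d_{i_{2t}}+2d_{i_{2t+1}}\big)+\big(d_{\tilde i_1}-d_{\tilde i_2}+d_{\tilde i_3}-\cdots-d_{\tilde i_{2s}}+2d_{\tilde i_{2s+1}}\big)-\sigma. \]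
   Context: A binary image is a finite set $F\subseteq\mathbb Z^2$; point $(i,j)$ lies in row $i$ and column $j$. The row sum $r_i$ is the number of points of $F$ in row $i$, and the column sum $c_j$ is the number of points of $F$ in column $j$. The horizontal boundary of $F$ is the set of ordered pairs of points $((i,j),(i',j))$ of $\mathbb Z^2$ with $|i-i'|=1$, $(i,j)\in F$ and $(i',j)\notin F$; its length is the number of such pairs. *)

theory Defs
  imports Main
begin

text \<open>A binary image is a finite set of lattice points; point (i,j) is in row i, column j.\<close>

definition row_sum :: "(int \<times> int) set \<Rightarrow> int \<Rightarrow> nat" where
  "row_sum F i = card {j. (i, j) \<in> F}"

definition col_sum :: "(int \<times> int) set \<Rightarrow> int \<Rightarrow> nat" where
  "col_sum F j = card {i. (i, j) \<in> F}"

definition hboundary :: "(int \<times> int) set \<Rightarrow> ((int \<times> int) \<times> (int \<times> int)) set" where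
  "hboundary F = {((i, j), (i', j')). j' = j \<and> \<bar>i - i'\<bar> = 1 \<and> (i, j) \<in> F \<and> (i', j) \<notin> F}"

definition hboundary_length :: "(int \<times> int) set \<Rightarrow> nat" where
  "hboundary_length F = card (hboundary F)"

definition bseq :: "(int \<times> int) set \<Rightarrow> int \<Rightarrow> int \<Rightarrow> int" where
  "bseq F n i = int (card {j \<in> {1..n}. int (col_sum F j) \<ge> i})"

definition dseq :: "(int \<times> int) set \<Rightarrow> int \<Rightarrow> int \<Rightarrow> int" where
  "dseq F n i = bseq F n i - int (row_sum F i)"

definition alt_sum :: "(int \<Rightarrow> int) \<Rightarrow> int list \<Rightarrow> int" where
  "alt_sum d xs = (\<Sum>l < length xs - 1. (-1) ^ l * d (xs ! l)) + 2 * d (last xs)"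

end

theory Submission
  imports Defs
begin

(* Write the right-hand side (minus 2n) as a weighted row sum
   sum_x w(x) d_x, where w collects the alternating coefficients of the two index
   lists I and J and the coefficient -1 of the rows 1..k in -sigma (plus an extra
   -1 at k when I ends at k, which only weakens the bound since d_k < 0).
   Since d_x = b_x - r_x is the sum over the columns of "column j pushed to the
   top rows 1..c_j" minus "column j", the weighted sum splits into one term per
   column, and L_h(F) splits into the numbers of run starts and run ends of the
   columns.  Per column, row 1 is filled and row m is empty, and a compression
   argument (move the last run of the column down onto the rest, by induction)
   reduces the column bound "weighted defect <= #run starts + #run ends - 2" to a
   single inequality about shifting a block of consecutive rows upwards.  That
   inequality is a finite case analysis on the tail sums of the alternating
   coefficients, which for strictly increasing odd-length lists oscillate between
   2 and 1 and then vanish. *)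

fun alternating :: "(int \<Rightarrow> int) \<Rightarrow> int list \<Rightarrow> int" where
  "alternating g [] = 0"
| "alternating g [x] = 2 * g x"
| "alternating g (x # y # zs) = g x - g y + alternating g zs"

lemma alt_sum_Cons2:
  assumes "zs \<noteq> []"
  shows "alt_sum g (x # y # zs) = g x - g y + alt_sum g zs"
proof -
  have len: "length (x # y # zs) - 1 = Suc (Suc (length zs - 1))"
    using assms by (cases zs) auto
  have "(\<Sum>l < length (x # y # zs) - 1. (-1::int) ^ l * g ((x # y # zs) ! l))
      = g x - g y + (\<Sum>l < length zs - 1. (-1) ^ l * g (zs ! l))"
    unfolding len by (simp only: sum.lessThan_Suc_shift) simp
  moreover have "last (x # y # zs) = last zs" using assms by simp
  ultimately show ?thesis unfolding alt_sum_def by simp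
qed

lemma alt_sum_eq_alternating: "odd (length K) \<Longrightarrow> alt_sum g K = alternating g K"
proof (induction g K rule: alternating.induct)
  case (2 g x) then show ?case by (simp add: alt_sum_def)
next
  case (3 g x y zs)
  then have "zs \<noteq> []" by auto
  with 3 show ?case by (simp add: alt_sum_Cons2)
qed simp

lemma alternating_cong: "(\<And>x. x \<in> set K \<Longrightarrow> g x = h x) \<Longrightarrow> alternating g K = alternating h K"
  by (induction g K rule: alternating.induct) auto

definition alt_coeff :: "int list \<Rightarrow> int \<Rightarrow> int" where
  "alt_coeff K x = alternating (\<lambda>i. if i = x then 1 else 0) K"

lemma sum_alt_coeff:
  assumes "finite B"
  shows "(\<Sum>x\<in>B. alt_coeff K x * h x) = alternating (\<lambda>i. if i \<in> B then h i else 0) K"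
proof (induction K rule: induct_list012)
  case (2 x)
  have "(\<Sum>z\<in>B. alt_coeff [x] z * h z) = (\<Sum>z\<in>B. if x = z then 2 * h z else 0)"
    unfolding alt_coeff_def by (rule sum.cong) auto
  then show ?case using assms by (simp add: sum.delta)
next
  case (3 x y zs)
  have "(\<Sum>z\<in>B. alt_coeff (x # y # zs) z * h z)
     = (\<Sum>z\<in>B. (if x = z then h z else 0)) - (\<Sum>z\<in>B. (if y = z then h z else 0))
       + (\<Sum>z\<in>B. alt_coeff zs z * h z)"
    unfolding sum.distrib[symmetric] sum_subtractf[symmetric] alt_coeff_def
    by (rule sum.cong) (auto simp: algebra_simps)
  then show ?case using 3(1) assms by (simp add: sum.delta)
qed (simp add: alt_coeff_def)

lemma alternating_as_sum:
  assumes "finite B" "set K \<subseteq> B"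
  shows "alternating h K = (\<Sum>x\<in>B. alt_coeff K x * h x)"
proof -
  have "alternating h K = alternating (\<lambda>i. if i \<in> B then h i else 0) K"
    using assms(2) by (intro alternating_cong) auto
  then show ?thesis by (simp add: sum_alt_coeff[OF assms(1)])
qed

definition alt_tail :: "int list \<Rightarrow> int \<Rightarrow> int" where
  "alt_tail K p = alternating (\<lambda>i. if p \<le> i then 1 else 0) K"

lemma alt_tail_as_sum:
  assumes "set K \<subseteq> {..m}"
  shows "(\<Sum>x\<in>{p..m}. alt_coeff K x) = alt_tail K p"
proof -
  have "(\<Sum>x\<in>{p..m}. alt_coeff K x) = (\<Sum>x\<in>{p..m}. alt_coeff K x * 1)" by simp
  also have "\<dots> = alternating (\<lambda>i. if i \<in> {p..m} then 1 else 0) K"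
    by (rule sum_alt_coeff) simp
  also have "\<dots> = alt_tail K p"
    unfolding alt_tail_def using assms by (intro alternating_cong) auto
  finally show ?thesis .
qed

lemma alt_tail_const:
  assumes "\<And>x. x \<in> set K \<Longrightarrow> x < p \<or> q \<le> x" "p \<le> q"
  shows "alt_tail K q = alt_tail K p"
  unfolding alt_tail_def using assms by (intro alternating_cong) force

lemma alt_tail_shape:
  assumes "sorted_wrt (<) K" "odd (length K)"
  shows "(p \<le> hd K \<longrightarrow> alt_tail K p = 2)
       \<and> (p \<le> last K \<longrightarrow> 1 \<le> alt_tail K p \<and> alt_tail K p \<le> 2)
       \<and> (last K < p \<longrightarrow> alt_tail K p = 0) \<and> alt_tail K (last K) = 2"
  using assms
proof (induction K arbitrary: p rule: induct_list012)
  case (2 x) then show ?case by (simp add: alt_tail_def)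
next
  case (3 x y zs)
  have zs: "zs \<noteq> []" and s: "sorted_wrt (<) zs" "odd (length zs)" using 3(3,4) by auto
  have xy: "x < y" "\<forall>z\<in>set zs. y < z" using 3(3) by auto
  have hz: "y < hd zs" and lz: "y < last zs" using xy zs by (cases zs, auto)+
  note IH = "3.IH"(1)[OF s]
  have step: "\<And>p. alt_tail (x # y # zs) p
      = (if p \<le> x then 1 else 0) - (if p \<le> y then 1 else 0) + alt_tail zs p"
    by (simp add: alt_tail_def)
  have lst: "last (x # y # zs) = last zs" "hd (x # y # zs) = x" using zs by auto
  have "p \<le> y \<Longrightarrow> alt_tail zs p = 2" using IH[of p] hz by auto
  moreover have "alt_tail (x # y # zs) (last zs) = 2"
    using step[of "last zs"] IH[of "last zs"] lz xy by auto
  ultimately show ?case using step[of p] IH[of p] lst xy lz by auto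
qed simp

definition tail_profile :: "(int \<Rightarrow> int) \<Rightarrow> int \<Rightarrow> bool" where
  "tail_profile U l \<longleftrightarrow> (\<forall>p. 0 \<le> U p \<and> U p \<le> 2) \<and> (\<forall>p. U p = 0 \<longleftrightarrow> l < p)"

lemma alt_tail_profile:
  assumes "sorted_wrt (<) K" "odd (length K)"
  shows "tail_profile (alt_tail K) (last K)"
  unfolding tail_profile_def
proof (intro conjI allI)
  fix p
  have shape: "(p \<le> last K \<longrightarrow> 1 \<le> alt_tail K p \<and> alt_tail K p \<le> 2)
      \<and> (last K < p \<longrightarrow> alt_tail K p = 0)"
    using alt_tail_shape[OF assms] by blast
  then show "0 \<le> alt_tail K p" "alt_tail K p \<le> 2" "alt_tail K p = 0 \<longleftrightarrow> last K < p"
    by (cases "p \<le> last K"; auto)+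
qed

lemma tail_profile_rise:
  assumes "tail_profile U l" "p \<le> q"
  shows "U q - U p \<le> 1"
  using assms unfolding tail_profile_def
  by (smt (verit))

lemma tail_profile_swap:
  assumes "tail_profile U l" "p \<le> p'" "q \<le> q'" "p' \<le> q'"
  shows "U p - U p' + U q' - U q \<le> 2"
  using assms unfolding tail_profile_def
  by (smt (verit))

(* UI and UJ are the tail profiles of the
   two index lists; UI is constant right of k+1 (the first list lives in 1..k and m),
   UJ is constant on 2..k+1 (the second list lives in 1 and k+1..m).
   suffix_weight p is the suffix sum, from p on, of the coefficients of the whole lower bound; e records
   whether the first list ends at k, in which case an extra coefficient -1 is put
   at k (harmless since d_k < 0).  The claim shift_bound says that moving a block
   of l consecutive rows upwards (from s to a >= 2) changes the weighted sum by at
   most 2. *)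
locale shift_setting =
  fixes UI UJ :: "int \<Rightarrow> int" and lI lJ k m :: int and e :: bool
  assumes UI_profile: "tail_profile UI lI" and UJ_profile: "tail_profile UJ lJ"
    and UI_const: "\<And>p. k + 1 \<le> p \<Longrightarrow> p \<le> m \<Longrightarrow> UI p = UI (k + 1)"
    and UJ_const: "\<And>p. 2 \<le> p \<Longrightarrow> p \<le> k + 1 \<Longrightarrow> UJ p = UJ (k + 1)"
    and UI_after_k: "lI \<le> k \<or> UI (k + 1) = 2"
    and e_iff: "e \<longleftrightarrow> lI = k"
begin

definition suffix_weight :: "int \<Rightarrow> int" where
  "suffix_weight p = UI p + UJ p - max 0 (k + 1 - p) - (if e \<and> p \<le> k then 1 else 0)"

lemma UI_range: "0 \<le> UI p" "UI p \<le> 2"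
  using UI_profile unfolding tail_profile_def by auto

lemmas UJ_rise = tail_profile_rise[OF UJ_profile]
  and UI_swap = tail_profile_swap[OF UI_profile]
  and UJ_swap = tail_profile_swap[OF UJ_profile]

lemma e_facts:
  assumes e
  shows "UI (k + 1) = 0" and "p \<le> k \<Longrightarrow> 1 \<le> UI p"
proof -
  have lI: "lI = k" using assms e_iff by simp
  show "UI (k + 1) = 0" using UI_profile lI unfolding tail_profile_def by simp
  assume "p \<le> k"
  then have "UI p \<noteq> 0" using UI_profile lI unfolding tail_profile_def by simp
  then show "1 \<le> UI p" using UI_range[of p] by linarith
qed

(* Balancing the profile drop of UI up to k+1 against the coefficients -1 on 1..k. *)
lemma UI_drop_to_k:
  assumes "a \<le> k"
  shows "UI a - UI (k + 1) - (k + 1 - a) - (if e then 1 else 0) \<le> 0"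
proof (cases "UI (k + 1) = 2")
  case True then show ?thesis using UI_range[of a] assms by simp
next
  case False
  then have lI: "lI \<le> k" and UI0: "UI (k + 1) = 0"
    using UI_after_k UI_profile unfolding tail_profile_def by auto
  show ?thesis
  proof (cases "a = k \<and> \<not> e")
    case True
    then have "UI a = 0" using lI e_iff UI_profile unfolding tail_profile_def by auto
    then show ?thesis using UI0 True by simp
  next
    case False then show ?thesis using UI0 UI_range[of a] assms by auto
  qed
qed

lemma shift_bound_right:
  assumes h: "2 \<le> a" "a \<le> s" "1 \<le> l" "s + l \<le> m" and s: "k + 1 \<le> s"
  shows "suffix_weight a - suffix_weight (a + l) - (suffix_weight s - suffix_weight (s + l)) \<le> 2"
proof -
  have UIs: "UI s = UI (k + 1)" "UI (s + l) = UI (k + 1)"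
    using UI_const[of s] UI_const[of "s + l"] s h by auto
  consider "k + 1 \<le> a" | "a \<le> k" "a + l \<le> k" | "a \<le> k" "k + 1 \<le> a + l" by linarith
  then show ?thesis
  proof cases
    case 1
    have "UI a = UI (k + 1)" "UI (a + l) = UI (k + 1)"
      using UI_const[of a] UI_const[of "a + l"] 1 h by auto
    then show ?thesis using 1 s UIs h UJ_swap[of a "a + l" s "s + l"] unfolding suffix_weight_def by simp
  next
    case 2
    have "UJ a = UJ (k + 1)" "UJ (a + l) = UJ (k + 1)"
      using UJ_const[of a] UJ_const[of "a + l"] 2 h by auto
    then show ?thesis
      using 2 s UIs h UJ_rise[of s "s + l"] UI_range[of a] UI_range[of "a + l"]
      unfolding suffix_weight_def by simp
  next
    case 3
    have "UJ a = UJ (k + 1)" "UI (a + l) = UI (k + 1)"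
      using UJ_const[of a] UI_const[of "a + l"] 3 h by auto
    moreover have "UJ (k + 1) - UJ (a + l) + UJ (s + l) - UJ s \<le> 2"
      using UJ_swap[of "k + 1" "a + l" s "s + l"] 3 s h by simp
    ultimately show ?thesis
      using 3 s UIs h UI_drop_to_k[of a] unfolding suffix_weight_def by (auto split: if_splits)
  qed
qed

lemma shift_bound_left:
  assumes h: "2 \<le> a" "a \<le> s" "1 \<le> l" "s + l \<le> m" and s: "s \<le> k"
  shows "suffix_weight a - suffix_weight (a + l) - (suffix_weight s - suffix_weight (s + l)) \<le> 2"
proof -
  have UJa: "UJ a = UJ (k + 1)" and UJs: "UJ s = UJ (k + 1)"
    using UJ_const[of a] UJ_const[of s] s h by auto
  consider "s + l \<le> k + 1" | "a + l \<le> k + 1" "k + 1 < s + l" | "k + 1 < a + l" by linarith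
  then show ?thesis
  proof cases
    case 1
    have "UJ (a + l) = UJ (k + 1)" "UJ (s + l) = UJ (k + 1)"
      using UJ_const[of "a + l"] UJ_const[of "s + l"] 1 h by auto
    moreover have "UI a - UI (a + l) + UI (s + l) - UI s
        + (if e \<and> a + l \<le> k \<and> \<not> s + l \<le> k then 1 else 0) \<le> 2"
    proof (cases "e \<and> a + l \<le> k \<and> \<not> s + l \<le> k")
      case True
      then have "s + l = k + 1" "UI (k + 1) = 0" "1 \<le> UI s" using e_facts 1 s by auto
      then show ?thesis using True UI_range[of a] UI_range[of "a + l"] by simp
    next
      case False then show ?thesis using UI_swap[of a "a + l" s "s + l"] h by auto
    qed
    ultimately show ?thesis using 1 s h UJa UJs unfolding suffix_weight_def by (auto split: if_splits)
  next
    case 2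
    have "UJ (a + l) = UJ (k + 1)" "UI (s + l) = UI (k + 1)"
      using UJ_const[of "a + l"] UI_const[of "s + l"] 2 h by auto
    moreover have "UI a - UI (a + l) + UI (k + 1) - UI s + (if e \<and> a + l \<le> k then 1 else 0) \<le> 2"
    proof (cases "e \<and> a + l \<le> k")
      case True
      then have "UI (k + 1) = 0" "1 \<le> UI s" using e_facts s by auto
      then show ?thesis using True UI_range[of a] UI_range[of "a + l"] by simp
    next
      case False then show ?thesis using UI_swap[of a "a + l" s "k + 1"] h 2 s by auto
    qed
    moreover have "UJ (s + l) - UJ (k + 1) \<le> 1" using UJ_rise[of "k + 1" "s + l"] 2 by simp
    ultimately show ?thesis using 2 s h UJa UJs unfolding suffix_weight_def by (auto split: if_splits)
  next
    case 3
    have "UI (a + l) = UI (k + 1)" "UI (s + l) = UI (k + 1)"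
      using UI_const[of "a + l"] UI_const[of "s + l"] 3 h by auto
    moreover have "UI a - UI s + UJ (s + l) - UJ (a + l) - (s - a) \<le> 2"
      using UI_range[of a] UI_range[of s] UJ_rise[of "a + l" "s + l"] h
      by (cases "a = s") auto
    ultimately show ?thesis using 3 s h UJa UJs unfolding suffix_weight_def by (auto split: if_splits)
  qed
qed

lemma shift_bound:
  assumes "2 \<le> a" "a \<le> s" "1 \<le> l" "s + l \<le> m"
  shows "suffix_weight a - suffix_weight (a + l) - (suffix_weight s - suffix_weight (s + l)) \<le> 2"
  using shift_bound_left[OF assms] shift_bound_right[OF assms] by linarith

end

(* Maximal runs of consecutive integers in a set: their first and last elements.
   In a column of the image these are exactly the cells with a horizontal boundary
   edge above, resp. below. *)
definition run_starts :: "int set \<Rightarrow> int set" where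
  "run_starts S = {i \<in> S. i - 1 \<notin> S}"

definition run_ends :: "int set \<Rightarrow> int set" where
  "run_ends S = {i \<in> S. i + 1 \<notin> S}"

lemma sum_split_ivl:
  fixes w :: "int \<Rightarrow> int"
  assumes "a \<le> b + 1" "b \<le> c"
  shows "(\<Sum>x\<in>{a..c}. w x) = (\<Sum>x\<in>{a..b}. w x) + (\<Sum>x\<in>{b+1..c}. w x)"
proof -
  have "{a..c} = {a..b} \<union> {b+1..c}" using assms by auto
  then show ?thesis by (simp add: sum.union_disjoint)
qed

lemma last_run:
  fixes S :: "int set"
  assumes "finite S" "S \<noteq> {}"
  obtains s0 e where "s0 \<le> e" "{s0..e} \<subseteq> S" "s0 - 1 \<notin> S" "\<forall>x\<in>S. x \<le> e"
proof -
  define e where "e = Max S"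
  have eS: "e \<in> S" and emax: "\<forall>x\<in>S. x \<le> e" unfolding e_def using assms by auto
  define Q where "Q = {x \<in> S. {x..e} \<subseteq> S}"
  have finQ: "finite Q" using assms(1) unfolding Q_def by auto
  have "e \<in> Q" using eS unfolding Q_def by auto
  define s0 where "s0 = Min Q"
  have "s0 \<in> Q" using finQ \<open>e \<in> Q\<close> unfolding s0_def by (intro Min_in) auto
  then have s0S: "s0 \<in> S" and run: "{s0..e} \<subseteq> S" unfolding Q_def by auto
  have "s0 - 1 \<notin> S"
  proof
    assume "s0 - 1 \<in> S"
    have "{s0 - 1..e} \<subseteq> S"
    proof
      fix x assume "x \<in> {s0 - 1..e}"
      then show "x \<in> S" using run \<open>s0 - 1 \<in> S\<close> by (cases "x = s0 - 1") auto
    qed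
    then have "s0 - 1 \<in> Q" using \<open>s0 - 1 \<in> S\<close> unfolding Q_def by auto
    then have "s0 \<le> s0 - 1" using Min_le[OF finQ] unfolding s0_def by blast
    then show False by simp
  qed
  then show ?thesis using that s0S emax run by auto
qed

lemma remove_last_run:
  fixes S S' :: "int set"
  assumes run: "{s0..e} \<subseteq> S" "s0 \<le> e" "s0 - 1 \<notin> S" and top: "\<forall>x\<in>S. x \<le> e"
    and S': "S' = {x \<in> S. x < s0}"
  shows "S = S' \<union> {s0..e}" "S' \<inter> {s0..e} = {}"
    and "run_starts S = insert s0 (run_starts S')" "s0 \<notin> run_starts S'"
    and "run_ends S = insert e (run_ends S')" "e \<notin> run_ends S'"
proof -
  have below: "\<forall>x\<in>S'. x < s0" and gap: "s0 - 1 \<notin> S'" using run(3) unfolding S' by auto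
  show split: "S = S' \<union> {s0..e}" using run(1) top unfolding S' by force
  show "S' \<inter> {s0..e} = {}" using below by auto
  show "run_starts S = insert s0 (run_starts S')" "s0 \<notin> run_starts S'"
    unfolding run_starts_def split using below gap run(2) by auto
  show "run_ends S = insert e (run_ends S')" "e \<notin> run_ends S'"
  proof -
    have "\<forall>x\<in>S'. x + 1 < s0"
    proof
      fix x assume "x \<in> S'"
      then have "x < s0" "x \<noteq> s0 - 1" using below gap by auto
      then show "x + 1 < s0" by linarith
    qed
    then show "run_ends S = insert e (run_ends S')" "e \<notin> run_ends S'"
      unfolding run_ends_def split using below run(2) by auto
  qed
qed

lemma peel_last_run:
  fixes S :: "int set"
  assumes fin: "finite S" and sub: "S \<subseteq> {1..m-1}" and one: "1 \<in> S"
  obtains s0 e S' where "S' = {x \<in> S. x < s0}" "S = S' \<union> {s0..e}" "S' \<inter> {s0..e} = {}"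
    "s0 = 1 \<or> 3 \<le> s0" "s0 \<le> e" "e + 1 \<le> m" "S' \<subseteq> {1..s0-2}"
    "card (run_starts S) = Suc (card (run_starts S'))"
    "card (run_ends S) = Suc (card (run_ends S'))"
proof -
  obtain s0 e where run: "s0 \<le> e" "{s0..e} \<subseteq> S" "s0 - 1 \<notin> S" and top: "\<forall>x\<in>S. x \<le> e"
    using last_run[OF fin] one by blast
  define S' where "S' = {x \<in> S. x < s0}"
  note parts = remove_last_run[OF run(2,1,3) top S'_def]
  have "finite (run_starts S')" "finite (run_ends S')"
    using fin unfolding S'_def run_starts_def run_ends_def by auto
  then have runs: "card (run_starts S) = Suc (card (run_starts S'))"
      "card (run_ends S) = Suc (card (run_ends S'))"
    using parts(3-6) by simp_all
  have below: "S' \<subseteq> {1..s0-2}"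
  proof
    fix x assume "x \<in> S'"
    then have "x \<in> S" "x < s0" "x \<noteq> s0 - 1" using run(3) unfolding S'_def by auto
    then show "x \<in> {1..s0-2}" using sub by auto
  qed
  have "s0 \<in> S" "e \<in> S" using run by auto
  then have "1 \<le> s0" "s0 \<noteq> 2" "e + 1 \<le> m" using one run(3) sub by auto
  then have "s0 = 1 \<or> 3 \<le> s0" by linarith
  from that[OF S'_def parts(1,2) this run(1) \<open>e + 1 \<le> m\<close> below runs] show ?thesis .
qed

(* Proof by induction on |S|: move the last run down onto the rest. *)
lemma compression_bound:
  fixes w :: "int \<Rightarrow> int" and m :: int
  assumes shift: "\<And>a s l. 2 \<le> a \<Longrightarrow> a \<le> s \<Longrightarrow> 1 \<le> l \<Longrightarrow> s + l \<le> m \<Longrightarrow>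
     (\<Sum>x\<in>{a..a+l-1}. w x) - (\<Sum>x\<in>{s..s+l-1}. w x) \<le> 2"
  shows "finite S \<Longrightarrow> S \<subseteq> {1..m-1} \<Longrightarrow> 1 \<in> S \<Longrightarrow>
    (\<Sum>x\<in>{1..int (card S)}. w x) - (\<Sum>x\<in>S. w x)
      \<le> int (card (run_starts S)) + int (card (run_ends S)) - 2"
proof (induction "card S" arbitrary: S rule: less_induct)
  case less
  note fin = less.prems(1) and sub = less.prems(2) and one = less.prems(3)
  obtain s0 e S' where S'_def: "S' = {x \<in> S. x < s0}"
      and parts: "S = S' \<union> {s0..e}" "S' \<inter> {s0..e} = {}"
      and run: "s0 = 1 \<or> 3 \<le> s0" "s0 \<le> e" "e + 1 \<le> m" "S' \<subseteq> {1..s0-2}"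
      and card_runs: "card (run_starts S) = Suc (card (run_starts S'))"
        "card (run_ends S) = Suc (card (run_ends S'))"
    by (rule peel_last_run[OF fin sub one])
  have finS': "finite S'" using fin unfolding S'_def by auto
  have card_S: "int (card S) = int (card S') + (e - s0 + 1)"
    using parts finS' run(2) by (simp add: card_Un_disjoint)
  have sum_S: "(\<Sum>x\<in>S. w x) = (\<Sum>x\<in>S'. w x) + (\<Sum>x\<in>{s0..e}. w x)"
    using parts finS' by (simp add: sum.union_disjoint)
  show ?case
  proof (cases "s0 = 1")
    case True
    then have "S' = {}" using run(4) by auto
    then show ?thesis using card_runs card_S sum_S True by simp
  next
    case False
    then have s0_3: "3 \<le> s0" using run(1) by simp
    have one': "1 \<in> S'" using one s0_3 unfolding S'_def by auto
    define c where "c = int (card S')"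
    have c_bounds: "1 \<le> c" "c \<le> s0 - 2"
    proof -
      have "card S' > 0" using one' finS' card_gt_0_iff by blast
      moreover have "card S' \<le> card {1..s0-2}" using run(4) by (intro card_mono) auto
      ultimately show "1 \<le> c" "c \<le> s0 - 2" unfolding c_def using s0_3 by auto
    qed
    have "card S' < card S" using card_S run(2) by linarith
    moreover have "S' \<subseteq> {1..m-1}" using sub unfolding S'_def by auto
    ultimately have IH: "(\<Sum>x\<in>{1..c}. w x) - (\<Sum>x\<in>S'. w x)
        \<le> int (card (run_starts S')) + int (card (run_ends S')) - 2"
      unfolding c_def using less.hyps finS' one' by blast
    define l where "l = e - s0 + 1"
    have split: "(\<Sum>x\<in>{1..int (card S)}. w x) = (\<Sum>x\<in>{1..c}. w x) + (\<Sum>x\<in>{c+1..c+l}. w x)"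
      using sum_split_ivl[of 1 c "c + l" w] card_S c_bounds run(2) unfolding c_def l_def by simp
    have "(\<Sum>x\<in>{c+1..(c+1)+l-1}. w x) - (\<Sum>x\<in>{s0..s0+l-1}. w x) \<le> 2"
      using c_bounds run(2,3) unfolding l_def by (intro shift) auto
    moreover have "(c + 1) + l - 1 = c + l" "s0 + l - 1 = e" unfolding l_def by simp_all
    ultimately have "(\<Sum>x\<in>{c+1..c+l}. w x) - (\<Sum>x\<in>{s0..e}. w x) \<le> 2" by simp
    then show ?thesis using IH split sum_S card_runs by simp
  qed
qed

(* The weight of row x in the lower bound: alternating coefficients of I and J,
   -1 on rows 1..k (the term -sigma), and an extra -1 at k when I ends at k. *)
definition weight :: "int list \<Rightarrow> int list \<Rightarrow> int \<Rightarrow> bool \<Rightarrow> int \<Rightarrow> int" where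
  "weight I J k e x = alt_coeff I x + alt_coeff J x
     - (if 1 \<le> x \<and> x \<le> k then 1 else 0) - (if e \<and> x = k then 1 else 0)"

lemma weighted_sum_eq:
  assumes "set I \<subseteq> {1..m}" "set J \<subseteq> {1..m}" "1 \<le> k" "k \<le> m"
  shows "alternating g I + alternating g J - (\<Sum>i=1..k. g i) - (if e then g k else 0)
       = (\<Sum>x\<in>{1..m}. weight I J k e x * g x)"
proof -
  have initial: "(\<Sum>x\<in>{1..m}. (if 1 \<le> x \<and> x \<le> k then 1 else 0) * g x) = (\<Sum>i=1..k. g i)"
    using assms(4) by (intro sum.mono_neutral_cong_right) auto
  have at_k: "(\<Sum>x\<in>{1..m}. (if e \<and> x = k then 1 else 0) * g x) = (if e then g k else 0)"
  proof -
    have "(\<Sum>x\<in>{1..m}. (if e \<and> x = k then 1 else 0) * g x)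
        = (\<Sum>x\<in>{1..m}. if x = k then (if e then g k else 0) else 0)"
      by (rule sum.cong) auto
    then show ?thesis using assms(3,4) by (simp add: sum.delta')
  qed
  have "(\<Sum>x\<in>{1..m}. weight I J k e x * g x)
     = (\<Sum>x\<in>{1..m}. alt_coeff I x * g x) + (\<Sum>x\<in>{1..m}. alt_coeff J x * g x)
     - (\<Sum>x\<in>{1..m}. (if 1 \<le> x \<and> x \<le> k then 1 else 0) * g x)
     - (\<Sum>x\<in>{1..m}. (if e \<and> x = k then 1 else 0) * g x)"
    unfolding weight_def sum.distrib[symmetric] sum_subtractf[symmetric]
    by (rule sum.cong) (simp_all add: left_diff_distrib distrib_right)
  then show ?thesis
    using initial at_k alternating_as_sum[of "{1..m}", OF _ assms(1)]
      alternating_as_sum[of "{1..m}", OF _ assms(2)] by simp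
qed

lemma weight_suffix_sum:
  assumes "set I \<subseteq> {1..m}" "set J \<subseteq> {1..m}" "k \<le> m" "1 \<le> p"
  shows "(\<Sum>x\<in>{p..m}. weight I J k e x)
       = alt_tail I p + alt_tail J p - max 0 (k + 1 - p) - (if e \<and> p \<le> k then 1 else 0)"
proof -
  have initial: "(\<Sum>x\<in>{p..m}. (if 1 \<le> x \<and> x \<le> k then 1 else 0 :: int)) = max 0 (k + 1 - p)"
  proof -
    have "(\<Sum>x\<in>{p..m}. (if 1 \<le> x \<and> x \<le> k then 1 else 0 :: int)) = (\<Sum>x\<in>{p..k}. 1)"
      using assms(3,4) by (intro sum.mono_neutral_cong_right) auto
    then show ?thesis by simp
  qed
  have at_k: "(\<Sum>x\<in>{p..m}. (if e \<and> x = k then 1 else 0 :: int)) = (if e \<and> p \<le> k then 1 else 0)"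
    using assms(3) by (cases e) (simp_all add: sum.delta')
  have "set I \<subseteq> {..m}" "set J \<subseteq> {..m}" using assms(1,2) by auto
  then show ?thesis
    unfolding weight_def sum.distrib sum_subtractf initial at_k by (simp add: alt_tail_as_sum)
qed

lemma weight_shift_bound:
  assumes I: "sorted_wrt (<) I" "odd (length I)" "set I \<subseteq> {1..k} \<union> {m}"
    and J: "sorted_wrt (<) J" "odd (length J)" "set J \<subseteq> {1} \<union> {k+1..m}"
    and k: "2 \<le> k" "k \<le> m - 1" and e: "e \<longleftrightarrow> last I = k"
    and h: "2 \<le> a" "a \<le> s" "1 \<le> l" "s + l \<le> m"
  shows "(\<Sum>x\<in>{a..a+l-1}. weight I J k e x) - (\<Sum>x\<in>{s..s+l-1}. weight I J k e x) \<le> 2"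
proof -
  have "last I \<in> set I" using I(2) by (cases I) auto
  then have last_I: "last I \<le> k \<or> last I = m" using I(3) by auto
  have I_const: "alt_tail I p = alt_tail I (k + 1)" if "k + 1 \<le> p" "p \<le> m" for p
  proof (rule alt_tail_const)
    fix x assume "x \<in> set I"
    then show "x < k + 1 \<or> p \<le> x" using I(3) that(2) by auto
  qed (fact that(1))
  have J_const: "alt_tail J p = alt_tail J (k + 1)" if "2 \<le> p" "p \<le> k + 1" for p
  proof (rule alt_tail_const[symmetric])
    fix x assume "x \<in> set J"
    then show "x < p \<or> k + 1 \<le> x" using J(3) that(1) by auto
  qed (fact that(2))
  have "alt_tail I (k + 1) = 2" if "last I = m"
    using I_const[of m] that k alt_tail_shape[OF I(1,2)] by simp
  then have after_k: "last I \<le> k \<or> alt_tail I (k + 1) = 2" using last_I by blast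
  interpret shift_setting "alt_tail I" "alt_tail J" "last I" "last J" k m e
    by (rule shift_setting.intro)
      (fact alt_tail_profile[OF I(1,2)] alt_tail_profile[OF J(1,2)] I_const J_const after_k e)+
  have IJ: "set I \<subseteq> {1..m}" "set J \<subseteq> {1..m}" using I(3) J(3) k by auto
  have interval: "(\<Sum>x\<in>{p..p+l-1}. weight I J k e x) = suffix_weight p - suffix_weight (p + l)"
    if "1 \<le> p" "p + l \<le> m" for p
  proof -
    have "(\<Sum>x\<in>{p..m}. weight I J k e x)
        = (\<Sum>x\<in>{p..p+l-1}. weight I J k e x) + (\<Sum>x\<in>{p+l..m}. weight I J k e x)"
      using sum_split_ivl[of p "p + l - 1" m] that h(3) by simp
    then show ?thesis
      unfolding suffix_weight_def using weight_suffix_sum[OF IJ] that h(3) k by simp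
  qed
  show ?thesis using interval[of a] interval[of s] h shift_bound[OF h] by simp
qed

(* Columns of a binary image, and the defect of column j at row x: the column
   pushed to the top rows 1..c_j, minus the column itself.  Summing defects over
   all columns gives d_x = b_x - r_x. *)
definition column :: "(int \<times> int) set \<Rightarrow> int \<Rightarrow> int set" where
  "column F j = {i. (i, j) \<in> F}"

definition column_defect :: "(int \<times> int) set \<Rightarrow> int \<Rightarrow> int \<Rightarrow> int" where
  "column_defect F j x = (if x \<le> int (col_sum F j) then 1 else 0) - (if x \<in> column F j then 1 else 0)"

lemma card_by_columns:
  fixes G :: "(int \<times> int) set"
  assumes "finite G" "G \<subseteq> UNIV \<times> {1..n}"
  shows "card G = (\<Sum>j\<in>{1..n}. card (column G j))"
proof -
  have eq: "G = prod.swap ` (SIGMA j:{1..n}. column G j)"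
    using assms(2) unfolding column_def by force
  have fin: "finite (column G j)" for j
  proof -
    have "column G j = fst ` (G \<inter> (UNIV \<times> {j}))" unfolding column_def by force
    then show ?thesis using assms(1) by simp
  qed
  have "card G = card (SIGMA j:{1..n}. column G j)"
    by (subst eq, rule card_image) (simp add: inj_on_def)
  also have "\<dots> = (\<Sum>j\<in>{1..n}. card (column G j))" using fin by (simp add: card_SigmaI)
  finally show ?thesis .
qed

lemma hboundary_split:
  "hboundary F = (\<lambda>p. (p, (fst p + 1, snd p))) ` {p\<in>F. (fst p + 1, snd p) \<notin> F}
     \<union> (\<lambda>p. (p, (fst p - 1, snd p))) ` {p\<in>F. (fst p - 1, snd p) \<notin> F}"
proof (rule set_eqI)
  fix z :: "(int \<times> int) \<times> (int \<times> int)"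
  obtain i j i' j' where z: "z = ((i, j), (i', j'))" by (metis prod.exhaust)
  have "z \<in> hboundary F \<longleftrightarrow> j' = j \<and> (i' = i + 1 \<or> i' = i - 1) \<and> (i, j) \<in> F \<and> (i', j) \<notin> F"
    unfolding z hboundary_def by auto
  then show "z \<in> hboundary F \<longleftrightarrow> z \<in> (\<lambda>p. (p, (fst p + 1, snd p))) ` {p\<in>F. (fst p + 1, snd p) \<notin> F}
     \<union> (\<lambda>p. (p, (fst p - 1, snd p))) ` {p\<in>F. (fst p - 1, snd p) \<notin> F}"
    unfolding z by force
qed

lemma hboundary_length_by_columns:
  assumes "finite F" "F \<subseteq> UNIV \<times> {1..n}"
  shows "int (hboundary_length F)
       = (\<Sum>j\<in>{1..n}. int (card (run_starts (column F j))) + int (card (run_ends (column F j))))"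
proof -
  let ?down = "{p\<in>F. (fst p + 1, snd p) \<notin> F}" and ?up = "{p\<in>F. (fst p - 1, snd p) \<notin> F}"
  have fin: "finite ?down" "finite ?up" using assms(1) by auto
  have "card (hboundary F) = card ?down + card ?up"
    unfolding hboundary_split by (subst card_Un_disjoint) (auto simp: fin card_image inj_on_def)
  moreover have "card ?down = (\<Sum>j\<in>{1..n}. card (run_ends (column F j)))"
    using card_by_columns[of ?down n] fin assms(2)
    by (auto simp: run_ends_def column_def)
  moreover have "card ?up = (\<Sum>j\<in>{1..n}. card (run_starts (column F j)))"
    using card_by_columns[of ?up n] fin assms(2)
    by (auto simp: run_starts_def column_def)
  ultimately show ?thesis unfolding hboundary_length_def by (simp add: sum.distrib)
qed

lemma column_frame:
  assumes "F \<subseteq> {1..m} \<times> {1..n}" "row_sum F 1 = nat n" "row_sum F m = 0"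
  shows "column F j \<subseteq> {1..m-1}" and "j \<in> {1..n} \<Longrightarrow> 1 \<in> column F j"
proof -
  have "{j. (m, j) \<in> F} \<subseteq> {1..n}" using assms(1) by auto
  then have "finite {j. (m, j) \<in> F}" by (rule finite_subset) simp
  then have "(m, j) \<notin> F" using assms(3) unfolding row_sum_def by simp
  show "column F j \<subseteq> {1..m-1}"
  proof
    fix i assume "i \<in> column F j"
    then have "(i, j) \<in> F" "i \<noteq> m" using \<open>(m, j) \<notin> F\<close> unfolding column_def by auto
    then show "i \<in> {1..m-1}" using assms(1) by auto
  qed
  have "{j. (1, j) \<in> F} = {1..n}"
    using assms(1,2) unfolding row_sum_def by (intro card_subset_eq) auto
  then show "j \<in> {1..n} \<Longrightarrow> 1 \<in> column F j" unfolding column_def by auto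
qed

lemma card_filter_as_sum:
  assumes "finite A"
  shows "int (card {j\<in>A. P j}) = (\<Sum>j\<in>A. if P j then 1 else 0)"
  using sum.inter_filter[OF assms, of "\<lambda>_. (1::int)" P] by simp

lemma dseq_by_columns:
  assumes "F \<subseteq> UNIV \<times> {1..n}"
  shows "dseq F n x = (\<Sum>j\<in>{1..n}. column_defect F j x)"
proof -
  have "bseq F n x = (\<Sum>j\<in>{1..n}. if x \<le> int (col_sum F j) then 1 else 0)"
    unfolding bseq_def by (rule card_filter_as_sum) simp
  moreover have "{j. (x, j) \<in> F} = {j\<in>{1..n}. x \<in> column F j}"
    using assms unfolding column_def by auto
  then have "int (row_sum F x) = (\<Sum>j\<in>{1..n}. if x \<in> column F j then 1 else 0)"
    unfolding row_sum_def using card_filter_as_sum[of "{1..n}" "\<lambda>j. x \<in> column F j"] by simp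
  ultimately show ?thesis unfolding dseq_def column_defect_def by (simp add: sum_subtractf)
qed

lemma sum_weight_defect:
  fixes w :: "int \<Rightarrow> int" and S :: "int set"
  assumes "S \<subseteq> {1..M}"
  shows "(\<Sum>x\<in>{1..M}. w x * ((if x \<le> int (card S) then 1 else 0) - (if x \<in> S then 1 else 0)))
       = (\<Sum>x\<in>{1..int (card S)}. w x) - (\<Sum>x\<in>S. w x)"
proof -
  have "card S \<le> card {1..M}" using assms by (intro card_mono) auto
  then have ivl: "{1..int (card S)} \<subseteq> {1..M}" by auto
  have "(\<Sum>x\<in>{1..M}. w x * ((if x \<le> int (card S) then 1 else 0) - (if x \<in> S then 1 else 0)))
      = (\<Sum>x\<in>{1..M}. if x \<le> int (card S) then w x else 0) - (\<Sum>x\<in>{1..M}. if x \<in> S then w x else 0)"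
    unfolding sum_subtractf[symmetric] by (rule sum.cong) (auto simp: right_diff_distrib)
  also have "(\<Sum>x\<in>{1..M}. if x \<le> int (card S) then w x else 0) = (\<Sum>x\<in>{1..int (card S)}. w x)"
    using ivl by (intro sum.mono_neutral_cong_right) auto
  also have "(\<Sum>x\<in>{1..M}. if x \<in> S then w x else 0) = (\<Sum>x\<in>S. w x)"
    using assms by (intro sum.mono_neutral_cong_right) auto
  finally show ?thesis .
qed

lemma column_weight_bound:
  fixes w :: "int \<Rightarrow> int"
  assumes frame: "column F j \<subseteq> {1..m-1}" "1 \<in> column F j"
    and shift: "\<And>a s l. 2 \<le> a \<Longrightarrow> a \<le> s \<Longrightarrow> 1 \<le> l \<Longrightarrow> s + l \<le> m \<Longrightarrow>
        (\<Sum>x\<in>{a..a+l-1}. w x) - (\<Sum>x\<in>{s..s+l-1}. w x) \<le> 2"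
  shows "(\<Sum>x\<in>{1..m}. w x * column_defect F j x)
       \<le> int (card (run_starts (column F j))) + int (card (run_ends (column F j))) - 2"
proof -
  have "finite (column F j)" using frame(1) by (rule finite_subset) simp
  then have "(\<Sum>x\<in>{1..int (card (column F j))}. w x) - (\<Sum>x\<in>column F j. w x)
      \<le> int (card (run_starts (column F j))) + int (card (run_ends (column F j))) - 2"
    using compression_bound[OF shift] frame by blast
  moreover have "column F j \<subseteq> {1..m}" using frame(1) by auto
  ultimately show ?thesis
    using sum_weight_defect[of "column F j" m w]
    unfolding column_defect_def col_sum_def column_def by simp
qed

(* Main theorem. *)
theorem theorem5p1:
  fixes F :: "(int \<times> int) set" and m n k :: int and t s :: nat
    and I J :: "int list"
  assumes "1 \<le> m" and "1 \<le> n"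
    and "F \<subseteq> {1..m} \<times> {1..n}"
    and "row_sum F 1 = nat n" and "row_sum F m = 0"
    and "2 \<le> k" and "k \<le> m - 1"
    and "dseq F n k < 0" and "dseq F n (k + 1) \<ge> 0"
    and "sorted_wrt (<) I" and "length I = 2 * t + 1"
    and "set I \<subseteq> {1..k} \<union> {m}"
    and "sorted_wrt (<) J" and "length J = 2 * s + 1"
    and "set J \<subseteq> {1} \<union> {k+1..m}"
  shows "int (hboundary_length F) \<ge>
           2 * n + alt_sum (dseq F n) I + alt_sum (dseq F n) J
             - (\<Sum>i = 1..k. dseq F n i)"
proof -
  define e where "e = (last I = k)"
  define w where "w = weight I J k e"
  have oddI: "odd (length I)" and oddJ: "odd (length J)" using assms(11,14) by auto
  have F_cols: "F \<subseteq> UNIV \<times> {1..n}" and finF: "finite F"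
    using assms(3) by (auto intro: finite_subset)
  have shift: "\<And>a s l. 2 \<le> a \<Longrightarrow> a \<le> s \<Longrightarrow> 1 \<le> l \<Longrightarrow> s + l \<le> m \<Longrightarrow>
      (\<Sum>x\<in>{a..a+l-1}. w x) - (\<Sum>x\<in>{s..s+l-1}. w x) \<le> 2"
    unfolding w_def e_def
    using weight_shift_bound[OF assms(10) oddI assms(12,13) oddJ assms(15,6,7)] by blast
  note frame = column_frame[OF assms(3-5)]
  have "alternating (dseq F n) I + alternating (dseq F n) J - (\<Sum>i=1..k. dseq F n i)
        - (if e then dseq F n k else 0) = (\<Sum>x\<in>{1..m}. w x * dseq F n x)"
    unfolding w_def using assms(6,7,12,15) by (intro weighted_sum_eq) auto
  also have "\<dots> = (\<Sum>j\<in>{1..n}. \<Sum>x\<in>{1..m}. w x * column_defect F j x)"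
    unfolding dseq_by_columns[OF F_cols] sum_distrib_left by (rule sum.swap)
  also have "\<dots> \<le> (\<Sum>j\<in>{1..n}.
      int (card (run_starts (column F j))) + int (card (run_ends (column F j))) - 2)"
    using column_weight_bound[OF frame shift] by (intro sum_mono) blast
  also have "\<dots> = int (hboundary_length F) - 2 * n"
    unfolding hboundary_length_by_columns[OF finF F_cols] sum_subtractf using assms(2) by simp
  finally show ?thesis
    using assms(8) alt_sum_eq_alternating[OF oddI] alt_sum_eq_alternating[OF oddJ]
    by (simp split: if_splits)
qed

end
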